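(* Let $M,N,K$ be symmetric homogeneous bi-variate means having symmetric asymptotic expansions with coefficients $(a^M_n)$, $(a^N_n)$, $(a^K_n)$. Suppose $K$ and $M$ are stable and $N$ is $(K,M)$-stabilizable, i.e. $N(s,t)=K\big(N(s,M(s,t)),N(M(s,t),t)\big)$ for all $s,t>0$. Then $a^N_0=1$ and for $m\ge1$ $$a^N_m=\frac{2^{2m}}{2^{2m}-1}\Big[\frac12\sum_{n=0}^{m-1}a^N_n\sum_{k=0}^{2m-2n}P[k,2n,\mathbf g^M]P[2m-2n-k,-2n+1,\mathbf h^M]+\sum_{n=1}^ma^K_n\sum_{k=0}^{m-n}P[k,2n,\mathbf d]P[m-n-k,-2n+1,\mathbf s]\Big],$$ with $\mathbf d,\mathbf s$ defined by $d_m=-\frac12\sum_{n=0}^ma^N_n\sum_{k=0}^{2m+1-2n}P[k,2n,\mathbf g^M]P[2m+1-2n-k,-2n+1,\mathbf h^M]$ and $s_m=\frac12\sum_{n=0}^ma^N_n\sum_{k=0}^{2m-2n}P[k,2n,\mathbf g^M]P[2m-2n-k,-2n+1,\mathbf h^M]$. In particular $a^N_1=\frac13(a^K_1+2a^M_1)$.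
   Context: A bi-variate mean is $M:(0,\infty)^2\to(0,\infty)$ with $\min(s,t)\le M(s,t)\le\max(s,t)$; symmetric and homogeneous (degree 1) as usual. $M$ is stable if $M(s,t)=M\big(M(s,M(s,t)),M(M(s,t),t)\big)$. For two nontrivial stable means $K,M$, a mean $N$ is $(K,M)$-stabilizable if $N(s,t)=K\big(N(s,M(s,t)),N(M(s,t),t)\big)$ for all $s,t>0$. A mean has a symmetric asymptotic expansion with coefficients $(a_n)$ if for every fixed real $t$ and $N\ge0$, $M(x-t,x+t)=\sum_{n=0}^Na_nt^{2n}x^{-2n+1}+o(x^{-2N+1})$ as $x\to\infty$. For a sequence $\mathbf b$ with $b_0\ne0$, $r\in\mathbb R$: $P[0,r,\mathbf b]=b_0^r$, $P[n,r,\mathbf b]=\frac1{nb_0}\sum_{k=1}^n(k(1+r)-n)b_kP[n-k,r,\mathbf b]$ ($n\ge1$), i.e. the coefficient of $z^n$ in $(\sum_jb_jz^j)^r$. $\mathbf g^M=(1,a^M_1,0,a^M_2,0,\ldots)$ ($g_0=1$, $g_{2k-1}=a^M_k$, $g_{2k}=0$), $\mathbf h^M=(2,-1,a^M_1,0,a^M_2,0,\ldots)$ ($h_0=2$, $h_1=-1$, $h_{2k}=a^M_k$, $h_{2k+1}=0$), $k\ge1$. *)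

theory Defs
  imports Complex_Main "HOL-Library.Landau_Symbols"
begin

text \<open>Bi-variate means, represented as functions real => real => real; only the
  values on positive arguments matter.\<close>

definition is_mean :: "(real \<Rightarrow> real \<Rightarrow> real) \<Rightarrow> bool" where
  "is_mean M \<longleftrightarrow> (\<forall>s>0. \<forall>t>0. min s t \<le> M s t \<and> M s t \<le> max s t)"

definition symmetric_mean :: "(real \<Rightarrow> real \<Rightarrow> real) \<Rightarrow> bool" where
  "symmetric_mean M \<longleftrightarrow> (\<forall>s>0. \<forall>t>0. M s t = M t s)"

definition homogeneous_mean :: "(real \<Rightarrow> real \<Rightarrow> real) \<Rightarrow> bool" where
  "homogeneous_mean M \<longleftrightarrow> (\<forall>l>0. \<forall>s>0. \<forall>t>0. M (l * s) (l * t) = l * M s t)"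

definition stable_mean :: "(real \<Rightarrow> real \<Rightarrow> real) \<Rightarrow> bool" where
  "stable_mean M \<longleftrightarrow> (\<forall>s>0. \<forall>t>0. M s t = M (M s (M s t)) (M (M s t) t))"

definition stabilizable :: "(real \<Rightarrow> real \<Rightarrow> real) \<Rightarrow> (real \<Rightarrow> real \<Rightarrow> real)
    \<Rightarrow> (real \<Rightarrow> real \<Rightarrow> real) \<Rightarrow> bool" where
  "stabilizable K M N \<longleftrightarrow> (\<forall>s>0. \<forall>t>0. N s t = K (N s (M s t)) (N (M s t) t))"

definition has_sym_expansion :: "(real \<Rightarrow> real \<Rightarrow> real) \<Rightarrow> (nat \<Rightarrow> real) \<Rightarrow> bool" where
  "has_sym_expansion M a \<longleftrightarrow>
     (\<forall>t::real. \<forall>N::nat.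
        (\<lambda>x. M (x - t) (x + t) - (\<Sum>n\<le>N. a n * t ^ (2 * n) * x powr (1 - 2 * real n)))
          \<in> o[at_top](\<lambda>x. x powr (1 - 2 * real N)))"

fun P :: "nat \<Rightarrow> real \<Rightarrow> (nat \<Rightarrow> real) \<Rightarrow> real" where
  "P 0 r b = b 0 powr r"
| "P (Suc n) r b = (1 / (real (Suc n) * b 0)) *
     (\<Sum>k\<in>{1..Suc n}. (real k * (1 + r) - real (Suc n)) * b k * P (Suc n - k) r b)"

definition gseq :: "(nat \<Rightarrow> real) \<Rightarrow> nat \<Rightarrow> real" where
  "gseq a j = (if j = 0 then 1 else if odd j then a ((j + 1) div 2) else 0)"

definition hseq :: "(nat \<Rightarrow> real) \<Rightarrow> nat \<Rightarrow> real" where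
  "hseq a j = (if j = 0 then 2 else if j = 1 then -1 else if even j then a (j div 2) else 0)"

definition dseq :: "(nat \<Rightarrow> real) \<Rightarrow> (nat \<Rightarrow> real) \<Rightarrow> nat \<Rightarrow> real" where
  "dseq aN aM m = - (1/2) * (\<Sum>n\<le>m. aN n * (\<Sum>k\<le>2*m+1-2*n.
      P k (2 * real n) (gseq aM) * P (2*m+1-2*n-k) (1 - 2 * real n) (hseq aM)))"

definition sseq :: "(nat \<Rightarrow> real) \<Rightarrow> (nat \<Rightarrow> real) \<Rightarrow> nat \<Rightarrow> real" where
  "sseq aN aM m = (1/2) * (\<Sum>n\<le>m. aN n * (\<Sum>k\<le>2*m-2*n.
      P k (2 * real n) (gseq aM) * P (2*m-2*n-k) (1 - 2 * real n) (hseq aM)))"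

end

theory Submission
  imports Defs "HOL-Computational_Algebra.Polynomial_FPS"
begin

text \<open>
  For a homogeneous mean X write f_X(u) = X(1 - u, 1 + u). Since X(x - 1, x + 1) = x f_X(1/x),
  the symmetric expansion of X at infinity is the expansion f_X(u) = \<Sum>n\<le>N. a_n u^(2n) + o(u^(2N))
  at 0. Expansions at 0, with a formal power series as coefficient sequence, are unique and
  respect sums, products, inverses and the reflection u \<mapsto> -u. Homogeneity gives
  X(c - \<delta>, c + \<delta>) = c f_X(\<delta>/c), so when c and \<delta> have expansions C and X D, the function
  X(c - \<delta>, c + \<delta>) has the expansion \<Sum>n. a_n C (X D / C)^(2n), whose coefficients are
  convolutions of powers of series, i.e. of the sequences P[-, r, b].

  This is applied twice. First to N and A(u) = N(1 - u, M(1 - u, 1 + u)), where 2c and 2\<delta>/u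
  have the coefficients h^M and g^M. Then to K: stabilizability says f_N(u) = K(A(u), A(-u)), and
  now c and -\<delta> are the even and odd parts of A, with coefficients s and d. Comparing the
  coefficients of u^(2m) gives an equation in which a^N_m occurs on the right only through s_m,
  with the factor 2^(-2m); solving it yields the recursion.
\<close>

section \<open>Landau symbols at \<open>0\<close>\<close>

lemma smallo_eventually_cong:
  assumes "f \<in> o[F](g)" and "eventually (\<lambda>x. f x = f' x \<and> g x = g' x) F"
  shows "f' \<in> o[F](g')"
  using assms landau_o.small.cong_ex[of f f' F g g'] by (auto simp: eventually_conj_iff)

lemma tendsto_imp_bigo_1: "(f \<longlongrightarrow> (c::real)) F \<Longrightarrow> f \<in> O[F](\<lambda>_. 1)"
  by (intro bigoI_tendsto[where c = c]) auto

lemma smallo_compose_bigo_ident: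
  fixes r v :: "real \<Rightarrow> real"
  assumes "r \<in> o[nhds 0](\<lambda>w. w ^ k)" and "(v \<longlongrightarrow> 0) (nhds 0)" and "v \<in> O[nhds 0](\<lambda>u. u)"
  shows "(\<lambda>u. r (v u)) \<in> o[nhds 0](\<lambda>u. u ^ k)"
  using landau_o.small.compose[OF assms(1,2)] landau_o.big_power[OF assms(3), of k]
  by (rule landau_o.small_big_trans)

lemma power_smallo_nhds_0:
  assumes "m < n"
  shows "(\<lambda>u::real. u ^ n) \<in> o[nhds 0](\<lambda>u. u ^ m)"
proof -
  have "((\<lambda>u::real. u ^ (n - m) / 1) \<longlongrightarrow> 0) (nhds 0)"
    using assms by (simp add: filterlim_ident)
  then have "(\<lambda>u::real. u ^ (n - m)) \<in> o[nhds 0](\<lambda>_. 1)"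
    by (rule smalloI_tendsto) simp
  then have "(\<lambda>u::real. u ^ (n - m) * u ^ m) \<in> o[nhds 0](\<lambda>u. 1 * u ^ m)"
    by (rule landau_o.small_big_mult) simp
  then show ?thesis
    using assms by (simp flip: power_add)
qed

lemma power_bigo_nhds_0:
  assumes "m \<le> n"
  shows "(\<lambda>u::real. u ^ n) \<in> O[nhds 0](\<lambda>u. u ^ m)"
proof -
  have "(\<lambda>u::real. u ^ (n - m)) \<in> O[nhds 0](\<lambda>_. 1)"
    using tendsto_power[OF filterlim_ident, of "n - m"] by (rule tendsto_imp_bigo_1)
  then have "(\<lambda>u::real. u ^ (n - m) * u ^ m) \<in> O[nhds 0](\<lambda>u. 1 * u ^ m)"
    by (rule landau_o.big.mult) simp
  then show ?thesis
    using assms by (simp flip: power_add)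
qed

lemma poly_smallo_nhds_0:
  assumes "\<And>i. i \<le> n \<Longrightarrow> coeff p i = 0"
  shows "(\<lambda>u. poly p u) \<in> o[nhds 0](\<lambda>u::real. u ^ n)"
proof -
  have "(\<lambda>u. \<Sum>i\<le>degree p. coeff p i * u ^ i) \<in> o[nhds 0](\<lambda>u::real. u ^ n)"
  proof (intro big_sum_in_smallo)
    fix i
    show "(\<lambda>u. coeff p i * u ^ i) \<in> o[nhds 0](\<lambda>u::real. u ^ n)"
      using assms[of i] power_smallo_nhds_0[of n i] by (cases "i \<le> n") auto
  qed
  then show ?thesis
    by (simp add: poly_altdef[abs_def])
qed

section \<open>Asymptotic expansions at \<open>0\<close>\<close>

definition asymp_expansion :: "(real \<Rightarrow> real) \<Rightarrow> real fps \<Rightarrow> bool" where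
  "asymp_expansion f F \<longleftrightarrow>
     (\<forall>n. (\<lambda>u. f u - poly (truncate_fps (Suc n) F) u) \<in> o[nhds 0](\<lambda>u. u ^ n))"

lemma asymp_expansionD:
  "asymp_expansion f F \<Longrightarrow> (\<lambda>u. f u - poly (truncate_fps (Suc n) F) u) \<in> o[nhds 0](\<lambda>u. u ^ n)"
  unfolding asymp_expansion_def by blast

lemma poly_truncate_fps_smallo:
  fixes F :: "real fps"
  assumes "n \<le> k"
  shows "(\<lambda>u. poly (truncate_fps (Suc k) F) u - poly (truncate_fps (Suc n) F) u)
           \<in> o[nhds 0](\<lambda>u. u ^ n)"
  using poly_smallo_nhds_0[of n "truncate_fps (Suc k) F - truncate_fps (Suc n) F"] assms
  by (simp add: coeff_truncate_fps)

lemma asymp_expansionI: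
  assumes "\<And>n. \<exists>k\<ge>n. (\<lambda>u. f u - poly (truncate_fps (Suc k) F) u) \<in> o[nhds 0](\<lambda>u. u ^ k)"
  shows "asymp_expansion f F"
  unfolding asymp_expansion_def
proof
  fix n
  obtain k where "n \<le> k" and k: "(\<lambda>u. f u - poly (truncate_fps (Suc k) F) u) \<in> o[nhds 0](\<lambda>u. u ^ k)"
    using assms by blast
  have "(\<lambda>u. f u - poly (truncate_fps (Suc k) F) u) \<in> o[nhds 0](\<lambda>u. u ^ n)"
    using k power_bigo_nhds_0[OF \<open>n \<le> k\<close>] by (rule landau_o.small_big_trans)
  then have "(\<lambda>u. (f u - poly (truncate_fps (Suc k) F) u) +
       (poly (truncate_fps (Suc k) F) u - poly (truncate_fps (Suc n) F) u)) \<in> o[nhds 0](\<lambda>u. u ^ n)"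
    using poly_truncate_fps_smallo[OF \<open>n \<le> k\<close>] by (rule sum_in_smallo)
  then show "(\<lambda>u. f u - poly (truncate_fps (Suc n) F) u) \<in> o[nhds 0](\<lambda>u. u ^ n)"
    by simp
qed

lemma asymp_expansion_cong:
  assumes "eventually (\<lambda>u. f u = g u) (nhds 0)"
  shows "asymp_expansion f F \<longleftrightarrow> asymp_expansion g F"
proof -
  have "(\<lambda>u. f u - poly p u) \<in> o[nhds 0](h) \<longleftrightarrow> (\<lambda>u. g u - poly p u) \<in> o[nhds 0](h)" for p h
    by (rule landau_o.small.in_cong) (use assms in \<open>auto elim: eventually_mono\<close>)
  then show ?thesis
    unfolding asymp_expansion_def by blast
qed

lemma asymp_expansion_poly: "asymp_expansion (\<lambda>u. poly p u) (fps_of_poly p)"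
  unfolding asymp_expansion_def
proof
  fix n
  have "(\<lambda>u. poly (p - truncate_fps (Suc n) (fps_of_poly p)) u) \<in> o[nhds 0](\<lambda>u. u ^ n)"
    by (intro poly_smallo_nhds_0) (simp add: coeff_truncate_fps)
  then show "(\<lambda>u. poly p u - poly (truncate_fps (Suc n) (fps_of_poly p)) u) \<in> o[nhds 0](\<lambda>u. u ^ n)"
    by simp
qed

lemma asymp_expansion_const: "asymp_expansion (\<lambda>_. c) (fps_const c)"
  using asymp_expansion_poly[of "[:c:]"] by (simp add: fps_of_poly_const)

lemma asymp_expansion_ident: "asymp_expansion (\<lambda>u. u) fps_X"
  using asymp_expansion_poly[of "[:0, 1:]"] by (simp add: fps_of_poly_pCons)

lemma asymp_expansion_add:
  assumes "asymp_expansion f F" "asymp_expansion g G"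
  shows "asymp_expansion (\<lambda>u. f u + g u) (F + G)"
  unfolding asymp_expansion_def
proof
  fix n
  have "(\<lambda>u. (f u - poly (truncate_fps (Suc n) F) u) + (g u - poly (truncate_fps (Suc n) G) u))
          \<in> o[nhds 0](\<lambda>u. u ^ n)"
    using assms by (intro sum_in_smallo asymp_expansionD)
  then show "(\<lambda>u. f u + g u - poly (truncate_fps (Suc n) (F + G)) u) \<in> o[nhds 0](\<lambda>u. u ^ n)"
    by (simp add: truncate_fps_add algebra_simps)
qed

lemma asymp_expansion_diff:
  assumes "asymp_expansion f F" "asymp_expansion g G"
  shows "asymp_expansion (\<lambda>u. f u - g u) (F - G)"
  unfolding asymp_expansion_def
proof
  fix n
  have "(\<lambda>u. (f u - poly (truncate_fps (Suc n) F) u) - (g u - poly (truncate_fps (Suc n) G) u))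
          \<in> o[nhds 0](\<lambda>u. u ^ n)"
    using assms by (intro sum_in_smallo asymp_expansionD)
  then show "(\<lambda>u. f u - g u - poly (truncate_fps (Suc n) (F - G)) u) \<in> o[nhds 0](\<lambda>u. u ^ n)"
    by (simp add: truncate_fps_diff algebra_simps)
qed

lemma truncate_fps_Suc_0: "truncate_fps (Suc 0) F = [:fps_nth F 0:]"
  by (rule poly_eqI) (simp add: coeff_truncate_fps coeff_pCons split: nat.split)

lemma asymp_expansion_tendsto: "asymp_expansion f F \<Longrightarrow> (f \<longlongrightarrow> fps_nth F 0) (nhds 0)"
  using asymp_expansionD[of f F 0]
  by (auto dest!: smalloD_tendsto intro: LIM_zero_cancel simp: truncate_fps_Suc_0)

lemma poly_truncate_fps:
  fixes u :: "'a::{comm_semiring_0,semiring_1}"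
  shows "poly (truncate_fps n F) u = (\<Sum>j<n. fps_nth F j * u ^ j)"
proof (cases n)
  case (Suc m)
  have "degree (truncate_fps n F) \<le> m"
    using Suc by (intro degree_le) (simp add: coeff_truncate_fps)
  then have "(\<Sum>i\<le>degree (truncate_fps n F). coeff (truncate_fps n F) i * u ^ i)
      = (\<Sum>j<n. fps_nth F j * u ^ j)"
    using Suc by (intro sum.mono_neutral_cong_left) (auto simp: coeff_truncate_fps intro: le_degree)
  then show ?thesis
    by (simp add: poly_altdef)
qed simp

lemma poly_truncate_fps_bigo_1: "(\<lambda>u. poly (truncate_fps n F) u) \<in> O[nhds 0](\<lambda>_. 1::real)"
  by (rule tendsto_imp_bigo_1[OF tendsto_poly[OF filterlim_ident]])

lemma coeff_truncate_fps_mult: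
  assumes "j \<le> n"
  shows "coeff (truncate_fps (Suc n) F * truncate_fps (Suc n) G) j = fps_nth (F * G) j"
  unfolding coeff_mult fps_mult_nth atLeast0AtMost using assms
  by (intro sum.cong) (auto simp: coeff_truncate_fps)

lemma asymp_expansion_mult:
  assumes f: "asymp_expansion f F" and g: "asymp_expansion g G"
  shows "asymp_expansion (\<lambda>u. f u * g u) (F * G)"
  unfolding asymp_expansion_def
proof
  fix n
  define tF tG tFG where "tF = truncate_fps (Suc n) F" and "tG = truncate_fps (Suc n) G"
    and "tFG = truncate_fps (Suc n) (F * G)"
  have "(\<lambda>u. (f u - poly tF u) * g u) \<in> o[nhds 0](\<lambda>u. u ^ n)"
    using asymp_expansionD[OF f] tendsto_imp_bigo_1[OF asymp_expansion_tendsto[OF g]]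
    unfolding tF_def by (rule landau_o.small_1_mult)
  moreover have "(\<lambda>u. (g u - poly tG u) * poly tF u) \<in> o[nhds 0](\<lambda>u. u ^ n)"
    using asymp_expansionD[OF g] poly_truncate_fps_bigo_1
    unfolding tF_def tG_def by (rule landau_o.small_1_mult)
  moreover have "(\<lambda>u. poly (tF * tG - tFG) u) \<in> o[nhds 0](\<lambda>u. u ^ n)"
    by (intro poly_smallo_nhds_0) (simp add: tF_def tG_def tFG_def coeff_truncate_fps_mult)
  ultimately have "(\<lambda>u. (f u - poly tF u) * g u + (g u - poly tG u) * poly tF u
      + poly (tF * tG - tFG) u) \<in> o[nhds 0](\<lambda>u. u ^ n)"
    by (intro sum_in_smallo)
  then show "(\<lambda>u. f u * g u - poly tFG u) \<in> o[nhds 0](\<lambda>u. u ^ n)"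
    by (simp add: algebra_simps)
qed

lemma asymp_expansion_cmult:
  "asymp_expansion f F \<Longrightarrow> asymp_expansion (\<lambda>u. c * f u) (fps_const c * F)"
  by (rule asymp_expansion_mult[OF asymp_expansion_const])

lemma asymp_expansion_power:
  "asymp_expansion f F \<Longrightarrow> asymp_expansion (\<lambda>u. f u ^ n) (F ^ n)"
  by (induction n) (use asymp_expansion_const[of 1] in \<open>auto intro: asymp_expansion_mult\<close>)

lemma asymp_expansion_sum:
  "finite A \<Longrightarrow> (\<And>i. i \<in> A \<Longrightarrow> asymp_expansion (f i) (F i))
    \<Longrightarrow> asymp_expansion (\<lambda>u. \<Sum>i\<in>A. f i u) (\<Sum>i\<in>A. F i)"
  by (induction A rule: finite_induct)
     (use asymp_expansion_const[of 0] in \<open>auto intro: asymp_expansion_add\<close>)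

lemma asymp_expansion_inverse:
  assumes f: "asymp_expansion f F" and F0: "fps_nth F 0 \<noteq> 0"
  shows "asymp_expansion (\<lambda>u. inverse (f u)) (inverse F)"
  unfolding asymp_expansion_def
proof
  fix n
  define tF tI where "tF = truncate_fps (Suc n) F" and "tI = truncate_fps (Suc n) (inverse F)"
  have lim: "(f \<longlongrightarrow> fps_nth F 0) (nhds 0)"
    using f by (rule asymp_expansion_tendsto)
  have "(\<lambda>u. (f u - poly tF u) * poly tI u) \<in> o[nhds 0](\<lambda>u. u ^ n)"
    using asymp_expansionD[OF f] poly_truncate_fps_bigo_1
    unfolding tF_def tI_def by (rule landau_o.small_1_mult)
  moreover have "(\<lambda>u. poly (tF * tI - 1) u) \<in> o[nhds 0](\<lambda>u. u ^ n)"
    by (intro poly_smallo_nhds_0)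
       (simp add: tF_def tI_def coeff_truncate_fps_mult inverse_mult_eq_1'[OF F0] coeff_1)
  ultimately have "(\<lambda>u. (f u - poly tF u) * poly tI u + poly (tF * tI - 1) u)
      \<in> o[nhds 0](\<lambda>u. u ^ n)"
    by (rule sum_in_smallo)
  then have "(\<lambda>u. ((f u - poly tF u) * poly tI u + poly (tF * tI - 1) u) * inverse (f u))
      \<in> o[nhds 0](\<lambda>u. u ^ n)"
    using tendsto_imp_bigo_1[OF tendsto_inverse[OF lim F0]] by (rule landau_o.small_1_mult)
  then have remainder: "(\<lambda>u. - (((f u - poly tF u) * poly tI u + poly (tF * tI - 1) u)
      * inverse (f u))) \<in> o[nhds 0](\<lambda>u. u ^ n)"
    by (simp only: landau_o.small.uminus_in_iff)
  have "eventually (\<lambda>u. - (((f u - poly tF u) * poly tI u + poly (tF * tI - 1) u)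
      * inverse (f u)) = inverse (f u) - poly tI u) (nhds 0)"
    using tendsto_imp_eventually_ne[OF lim F0] by eventually_elim (simp add: field_simps)
  from landau_o.small.in_cong[OF this] remainder
  show "(\<lambda>u. inverse (f u) - poly tI u) \<in> o[nhds 0](\<lambda>u. u ^ n)"
    by blast
qed

lemma asymp_expansion_reflect:
  assumes "asymp_expansion f F"
  shows "asymp_expansion (\<lambda>u. f (- u)) (F oo - fps_X)"
  unfolding asymp_expansion_def
proof
  fix n
  have "filterlim (\<lambda>u::real. - u) (nhds 0) (nhds 0)"
    using tendsto_minus[OF filterlim_ident, of "0::real"] by simp
  then have "(\<lambda>u. f (- u) - poly (truncate_fps (Suc n) F) (- u)) \<in> o[nhds 0](\<lambda>u. (- u) ^ n)"
    by (rule landau_o.small.compose[OF asymp_expansionD[OF assms]])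
  moreover have "(\<lambda>u::real. (- u) ^ n) = (\<lambda>u. (-1) ^ n * u ^ n)"
    by (rule ext) (rule power_minus)
  moreover have "poly (truncate_fps (Suc n) F) (- u) = poly (truncate_fps (Suc n) (F oo - fps_X)) u" for u
    unfolding poly_truncate_fps fps_compose_uminus' fps_nth_Abs_fps
    by (intro sum.cong refl) (subst power_minus, simp)
  ultimately show "(\<lambda>u. f (- u) - poly (truncate_fps (Suc n) (F oo - fps_X)) u) \<in> o[nhds 0](\<lambda>u. u ^ n)"
    by simp
qed

lemma power_not_smallo_nhds_0:
  assumes "c \<noteq> 0"
  shows "(\<lambda>u::real. c * u ^ n) \<notin> o[nhds 0](\<lambda>u. u ^ n)"
proof
  assume "(\<lambda>u::real. c * u ^ n) \<in> o[nhds 0](\<lambda>u. u ^ n)"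
  then have "eventually (\<lambda>u::real. u ^ n = 0) (nhds 0)"
    using assms by (simp add: landau_o.small_refl_iff)
  then obtain d :: real where "d > 0" and "\<And>u. \<bar>u\<bar> < d \<Longrightarrow> u ^ n = 0"
    unfolding eventually_nhds_metric dist_real_def by auto
  from this(2)[of "d / 2"] \<open>d > 0\<close> show False
    by simp
qed

lemma asymp_expansion_unique:
  assumes f: "asymp_expansion f F" and g: "asymp_expansion f G"
  shows "F = G"
proof (rule ccontr)
  assume "F \<noteq> G"
  define D j where "D = G - F" and "j = subdegree D"
  have "(\<lambda>u. (f u - poly (truncate_fps (Suc j) F) u) - (f u - poly (truncate_fps (Suc j) G) u))
      \<in> o[nhds 0](\<lambda>u. u ^ j)"
    using f g by (intro sum_in_smallo asymp_expansionD)
  moreover have "poly (truncate_fps (Suc j) G) u - poly (truncate_fps (Suc j) F) u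
      = fps_nth D j * u ^ j" for u
  proof -
    have "poly (truncate_fps (Suc j) G) u - poly (truncate_fps (Suc j) F) u
        = (\<Sum>i<Suc j. fps_nth D i * u ^ i)"
      by (simp add: D_def poly_truncate_fps sum_subtractf left_diff_distrib)
    also have "\<dots> = fps_nth D j * u ^ j"
      unfolding sum.lessThan_Suc using nth_less_subdegree_zero[of _ D]
      by (simp add: sum.neutral flip: j_def)
    finally show ?thesis .
  qed
  ultimately have "(\<lambda>u. fps_nth D j * u ^ j) \<in> o[nhds 0](\<lambda>u. u ^ j)"
    by simp
  moreover have "fps_nth D j \<noteq> 0"
    using \<open>F \<noteq> G\<close> unfolding j_def D_def by (intro nth_subdegree_nonzero) simp
  ultimately show False
    using power_not_smallo_nhds_0 by blast
qed

section \<open>The coefficients \<open>P[n, r, b]\<close>\<close>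

text \<open>\<open>B * fps_deriv Y = fps_const r * fps_deriv B * Y\<close> says that \<open>Y\<close> behaves like \<open>B\<^sup>r\<close>.\<close>

lemma fps_deriv_log_mult:
  fixes B Y Z :: "'a::field fps"
  assumes "B * fps_deriv Y = fps_const r * fps_deriv B * Y"
      and "B * fps_deriv Z = fps_const s * fps_deriv B * Z"
  shows "B * fps_deriv (Y * Z) = fps_const (r + s) * fps_deriv B * (Y * Z)"
proof -
  have "B * fps_deriv (Y * Z) = (B * fps_deriv Y) * Z + (B * fps_deriv Z) * Y"
    by (simp add: fps_deriv_mult algebra_simps)
  also have "\<dots> = (fps_const r + fps_const s) * fps_deriv B * (Y * Z)"
    unfolding assms by algebra
  finally show ?thesis
    by simp
qed

lemma fps_deriv_log_power:
  fixes B Y :: "'a::field fps"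
  assumes "B * fps_deriv Y = fps_const r * fps_deriv B * Y"
  shows "B * fps_deriv (Y ^ n) = fps_const (of_nat n * r) * fps_deriv B * Y ^ n"
proof (induction n)
  case (Suc n)
  then show ?case
    using fps_deriv_log_mult[OF assms Suc] by (simp add: algebra_simps)
qed simp

lemma fps_deriv_log_power_inverse_power:
  fixes B :: "'a::field fps"
  assumes "fps_nth B 0 \<noteq> 0"
  shows "B * fps_deriv (B ^ a * inverse B ^ c)
      = fps_const (of_nat a - of_nat c) * fps_deriv B * (B ^ a * inverse B ^ c)"
proof -
  have deriv_B: "B * fps_deriv B = fps_const 1 * fps_deriv B * B"
    by simp
  have "B * fps_deriv (inverse B) = - (B * inverse B) * (fps_deriv B * inverse B)"
    using fps_inverse_deriv[OF assms] by (simp add: power2_eq_square algebra_simps)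
  then have deriv_inverse_B: "B * fps_deriv (inverse B) = fps_const (- 1) * fps_deriv B * inverse B"
    by (simp add: inverse_mult_eq_1'[OF assms] fps_const_neg[of 1, symmetric])
  have "of_nat a * 1 + of_nat c * - 1 = (of_nat a - of_nat c :: 'a)"
    by simp
  then show ?thesis
    using fps_deriv_log_mult[OF fps_deriv_log_power[OF deriv_B, of a]
        fps_deriv_log_power[OF deriv_inverse_B, of c]] by metis
qed

lemma fps_X_mult_deriv_nth: "fps_nth (fps_X * fps_deriv Q) n = of_nat n * fps_nth Q n"
  by (cases n) (simp_all add: fps_X_mult_nth)

text \<open>The recursion defining \<open>P\<close> is the coefficient form of this differential equation.\<close>

lemma fps_nth_Suc_log_deriv:
  fixes Q :: "real fps" and b :: "nat \<Rightarrow> real"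
  assumes "Abs_fps b * fps_deriv Q = fps_const r * fps_deriv (Abs_fps b) * Q"
  shows "real (Suc m) * b 0 * fps_nth Q (Suc m)
      = (\<Sum>k = 1..Suc m. (real k * (1 + r) - real (Suc m)) * b k * fps_nth Q (Suc m - k))"
proof -
  have "Abs_fps b * (fps_X * fps_deriv Q) = fps_const r * (fps_X * fps_deriv (Abs_fps b) * Q)"
    using arg_cong[OF assms, of "\<lambda>F. fps_X * F"] by (simp add: algebra_simps)
  then have "fps_nth (Abs_fps b * (fps_X * fps_deriv Q)) (Suc m)
      = r * fps_nth (fps_X * fps_deriv (Abs_fps b) * Q) (Suc m)"
    by (simp only: fps_mult_left_const_nth)
  then have "(\<Sum>k = 0..Suc m. b k * (real (Suc m - k) * fps_nth Q (Suc m - k)))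
      = r * (\<Sum>k = 0..Suc m. real k * b k * fps_nth Q (Suc m - k))"
    by (simp only: fps_mult_nth[of "Abs_fps b"] fps_mult_nth[of "fps_X * fps_deriv (Abs_fps b)"]
        fps_X_mult_deriv_nth fps_nth_Abs_fps)
  moreover have "(\<Sum>k = 0..Suc m. g k) = g 0 + (\<Sum>k = 1..Suc m. g k)" for g :: "nat \<Rightarrow> real"
    using sum.atLeast_Suc_atMost[of 0 "Suc m" g] by simp
  ultimately have "b 0 * (real (Suc m) * fps_nth Q (Suc m))
      = (\<Sum>k = 1..Suc m. r * (real k * b k * fps_nth Q (Suc m - k))
           - b k * (real (Suc m - k) * fps_nth Q (Suc m - k)))"
    by (simp add: sum_subtractf sum_distrib_left del: sum.cl_ivl_Suc)
  also have "\<dots> = (\<Sum>k = 1..Suc m. (real k * (1 + r) - real (Suc m)) * b k * fps_nth Q (Suc m - k))"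
    by (intro sum.cong refl) (auto simp: of_nat_diff algebra_simps)
  finally show ?thesis
    by (simp only: mult_ac)
qed

lemma P_eq_fps_nth:
  fixes Q :: "real fps" and b :: "nat \<Rightarrow> real"
  assumes b0: "b 0 \<noteq> 0" and Q0: "fps_nth Q 0 = b 0 powr r"
      and deriv: "Abs_fps b * fps_deriv Q = fps_const r * fps_deriv (Abs_fps b) * Q"
  shows "P n r b = fps_nth Q n"
proof (induction n rule: less_induct)
  case (less n)
  show ?case
  proof (cases n)
    case (Suc m)
    have "P n r b = 1 / (real (Suc m) * b 0) *
        (\<Sum>k = 1..Suc m. (real k * (1 + r) - real (Suc m)) * b k * fps_nth Q (Suc m - k))"
      unfolding Suc P.simps using less.IH Suc by (intro arg_cong2[where f = "(*)"] refl sum.cong) auto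
    also have "\<dots> = fps_nth Q n"
      unfolding fps_nth_Suc_log_deriv[OF deriv, symmetric] using b0 Suc by simp
    finally show ?thesis .
  qed (simp add: Q0)
qed

lemma P_eq_nth_power_inverse_power:
  assumes "b 0 > 0"
  shows "P n (real a - real c) b = fps_nth (Abs_fps b ^ a * inverse (Abs_fps b) ^ c) n"
proof (rule P_eq_fps_nth)
  show "fps_nth (Abs_fps b ^ a * inverse (Abs_fps b) ^ c) 0 = b 0 powr (real a - real c)"
    using assms by (simp add: fps_nth_power_0 fps_inverse_nth_0 powr_diff powr_realpow field_simps)
  show "Abs_fps b * fps_deriv (Abs_fps b ^ a * inverse (Abs_fps b) ^ c)
      = fps_const (real a - real c) * fps_deriv (Abs_fps b) * (Abs_fps b ^ a * inverse (Abs_fps b) ^ c)"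
    using assms by (intro fps_deriv_log_power_inverse_power) simp
qed (use assms in simp)

lemma fps_nth_eq_P_convolution:
  assumes "s 0 > 0" and "d 0 > 0"
  shows "fps_nth (Abs_fps s * Abs_fps d ^ (2 * n) * inverse (Abs_fps s) ^ (2 * n)) j
    = (\<Sum>k\<le>j. P k (2 * real n) d * P (j - k) (1 - 2 * real n) s)"
proof -
  have "P k (2 * real n) d = fps_nth (Abs_fps d ^ (2 * n)) k" for k
    using P_eq_nth_power_inverse_power[of d k "2 * n" 0] assms by simp
  moreover have "P k (1 - 2 * real n) s = fps_nth (Abs_fps s * inverse (Abs_fps s) ^ (2 * n)) k" for k
    using P_eq_nth_power_inverse_power[of s k 1 "2 * n"] assms by simp
  moreover have "Abs_fps s * Abs_fps d ^ (2 * n) * inverse (Abs_fps s) ^ (2 * n)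
      = Abs_fps d ^ (2 * n) * (Abs_fps s * inverse (Abs_fps s) ^ (2 * n))"
    by (simp only: mult_ac)
  ultimately show ?thesis
    by (simp only: fps_mult_nth atLeast0AtMost)
qed

section \<open>Even expansions of means\<close>

definition fps_subst_sq :: "'a::comm_ring_1 fps \<Rightarrow> 'a fps" where
  "fps_subst_sq F = F oo fps_X ^ 2"

lemma fps_subst_sq_nth:
  "fps_nth (fps_subst_sq F) n = (if even n then fps_nth F (n div 2) else 0)"
proof -
  have "fps_nth (fps_subst_sq F) n = (\<Sum>i = 0..n. if i = n div 2 \<and> even n then fps_nth F i else 0)"
    unfolding fps_subst_sq_def fps_compose_nth
    by (intro sum.cong) (auto simp: power_mult[symmetric] fps_X_power_nth)
  then show ?thesis
    by (auto simp: sum.delta)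
qed

lemma fps_subst_sq_mult: "fps_subst_sq (F * G :: 'a::idom fps) = fps_subst_sq F * fps_subst_sq G"
  unfolding fps_subst_sq_def by (rule fps_compose_mult_distrib) simp

lemma fps_subst_sq_power: "fps_subst_sq (F ^ n :: 'a::idom fps) = fps_subst_sq F ^ n"
  unfolding fps_subst_sq_def by (rule fps_compose_power[symmetric]) simp

lemma fps_subst_sq_inverse:
  fixes F :: "'a::field fps"
  shows "fps_nth F 0 \<noteq> 0 \<Longrightarrow> fps_subst_sq (inverse F) = inverse (fps_subst_sq F)"
  unfolding fps_subst_sq_def by (rule fps_inverse_compose) simp_all

lemma poly_truncate_fps_subst_sq:
  "poly (truncate_fps (Suc (2 * N)) (fps_subst_sq (Abs_fps a))) u = (\<Sum>n\<le>N. a n * u ^ (2 * n))"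
proof (induction N)
  case (Suc N)
  have "Suc (2 * Suc N) = Suc (Suc (Suc (2 * N)))"
    by simp
  then show ?case
    using Suc by (simp add: poly_truncate_fps fps_subst_sq_nth)
qed (simp add: poly_truncate_fps fps_subst_sq_nth)

lemma mean_diag: "is_mean M \<Longrightarrow> x > 0 \<Longrightarrow> M x x = x"
  unfolding is_mean_def by (metis min.idem max.idem order_antisym)

lemma sym_expansion_coeff_0:
  assumes mean: "is_mean M" and ex: "has_sym_expansion M a"
  shows "a 0 = 1"
proof (rule ccontr)
  assume "a 0 \<noteq> 1"
  from ex have "(\<lambda>x. M (x - 0) (x + 0) - (\<Sum>n\<le>0. a n * 0 ^ (2 * n) * x powr (1 - 2 * real n)))
      \<in> o[at_top](\<lambda>x. x powr (1 - 2 * real (0::nat)))"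
    unfolding has_sym_expansion_def by blast
  then have "(\<lambda>x. M x x - a 0 * x powr 1) \<in> o[at_top](\<lambda>x. x powr 1)"
    by simp
  moreover have "eventually (\<lambda>x. M x x - a 0 * x powr 1 = (1 - a 0) * x \<and> x powr 1 = x) at_top"
    using eventually_gt_at_top[of 0] by eventually_elim (simp add: mean_diag[OF mean] algebra_simps)
  ultimately have "(\<lambda>x::real. (1 - a 0) * x) \<in> o[at_top](\<lambda>x. x)"
    by (rule smallo_eventually_cong)
  then have "eventually (\<lambda>x::real. x = 0) at_top"
    using \<open>a 0 \<noteq> 1\<close> by (simp add: landau_o.small_refl_iff)
  then obtain x0 where "\<And>x::real. x \<ge> x0 \<Longrightarrow> x = 0"
    unfolding eventually_at_top_linorder by blast
  from this[of "max x0 1"] show False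
    by simp
qed

lemma inverse_powr_odd:
  assumes "u > 0"
  shows "inverse u powr (1 - 2 * real n) = inverse u * u ^ (2 * n)"
proof -
  have "inverse u powr (1 - 2 * real n) = inverse u / inverse u powr real (2 * n)"
    using assms by (simp add: powr_diff)
  also have "inverse u powr real (2 * n) = inverse u ^ (2 * n)"
    using assms by (intro powr_realpow) simp
  finally show ?thesis
    by (simp add: power_inverse divide_inverse)
qed

text \<open>Substitute \<open>x = 1/u\<close>; homogeneity gives \<open>M (x - 1) (x + 1) = x * M (1 - u) (1 + u)\<close>.\<close>

lemma sym_expansion_at_right_0:
  assumes hom: "homogeneous_mean M" and ex: "has_sym_expansion M a"
  shows "(\<lambda>u. M (1 - u) (1 + u) - (\<Sum>n\<le>N. a n * u ^ (2 * n))) \<in> o[at_right 0](\<lambda>u. u ^ (2 * N))"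
    (is "?R \<in> _")
proof -
  have unit_interval: "eventually (\<lambda>u::real. u \<in> {0<..<1}) (at_right 0)"
    by (rule eventually_at_right_real) simp
  from ex have "(\<lambda>x. M (x - 1) (x + 1) - (\<Sum>n\<le>N. a n * 1 ^ (2 * n) * x powr (1 - 2 * real n)))
      \<in> o[at_top](\<lambda>x. x powr (1 - 2 * real N))"
    unfolding has_sym_expansion_def by blast
  from landau_o.small.compose[OF this filterlim_inverse_at_top_right]
  have "(\<lambda>u. M (inverse u - 1) (inverse u + 1) - (\<Sum>n\<le>N. a n * inverse u powr (1 - 2 * real n)))
      \<in> o[at_right 0](\<lambda>u. inverse u powr (1 - 2 * real N))"
    by simp
  moreover have "eventually (\<lambda>u. M (inverse u - 1) (inverse u + 1)
        - (\<Sum>n\<le>N. a n * inverse u powr (1 - 2 * real n)) = inverse u * ?R u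
      \<and> inverse u powr (1 - 2 * real N) = inverse u * u ^ (2 * N)) (at_right 0)"
    using unit_interval
  proof eventually_elim
    case (elim u)
    then have "M (inverse u - 1) (inverse u + 1) = M (inverse u * (1 - u)) (inverse u * (1 + u))"
      by (simp add: field_simps)
    also have "\<dots> = inverse u * M (1 - u) (1 + u)"
      using hom elim unfolding homogeneous_mean_def by auto
    moreover have "(\<Sum>n\<le>N. a n * inverse u powr (1 - 2 * real n))
        = inverse u * (\<Sum>n\<le>N. a n * u ^ (2 * n))"
      unfolding sum_distrib_left using elim by (intro sum.cong) (simp_all add: inverse_powr_odd)
    ultimately show ?case
      using elim by (simp add: inverse_powr_odd right_diff_distrib)
  qed
  ultimately have "(\<lambda>u. inverse u * ?R u) \<in> o[at_right 0](\<lambda>u. inverse u * u ^ (2 * N))"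
    by (rule smallo_eventually_cong)
  then have "(\<lambda>u. inverse u * ?R u * u) \<in> o[at_right 0](\<lambda>u. inverse u * u ^ (2 * N) * u)"
    by (rule landau_o.small.mult_right)
  moreover have "eventually (\<lambda>u. inverse u * ?R u * u = ?R u
      \<and> inverse u * u ^ (2 * N) * u = u ^ (2 * N)) (at_right (0::real))"
    using unit_interval by eventually_elim auto
  ultimately show ?thesis
    by (rule smallo_eventually_cong)
qed

lemma smallo_at_right_even_imp_at_0:
  fixes f g :: "real \<Rightarrow> real"
  assumes "f \<in> o[at_right 0](g)"
      and even: "eventually (\<lambda>u. f (- u) = f u \<and> g (- u) = g u) (at_right 0)"
  shows "f \<in> o[at 0](g)"
proof -
  have "filterlim (\<lambda>u::real. - u) (at_right 0) (at_left 0)"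
    by (simp add: filterlim_at_left_to_right filterlim_ident)
  with assms(1) have "(\<lambda>u. f (- u)) \<in> o[at_left 0](\<lambda>u. g (- u))"
    by (rule landau_o.small.compose)
  moreover have "eventually (\<lambda>u. f (- u) = f u \<and> g (- u) = g u) (at_left 0)"
    using even unfolding eventually_at_left_to_right by (auto elim: eventually_mono)
  ultimately have "f \<in> o[at_left 0](g)"
    by (rule smallo_eventually_cong)
  then show ?thesis
    unfolding at_eq_sup_left_right using assms(1) by (rule landau_o.small.sup)
qed

lemma smallo_at_imp_nhds:
  fixes f g :: "'a::topological_space \<Rightarrow> real"
  assumes "f \<in> o[at x](g)" and "f x = 0"
  shows "f \<in> o[nhds x](g)"
proof (rule landau_o.smallI)
  fix c :: real
  assume "c > 0"
  from landau_o.smallD[OF assms(1) this]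
  have "eventually (\<lambda>y. y \<noteq> x \<longrightarrow> norm (f y) \<le> c * norm (g y)) (nhds x)"
    by (simp add: eventually_at_filter)
  then show "eventually (\<lambda>y. norm (f y) \<le> c * norm (g y)) (nhds x)"
    by eventually_elim (use assms(2) \<open>c > 0\<close> in auto)
qed

lemma asymp_expansion_mean:
  assumes mean: "is_mean M" and sym: "symmetric_mean M" and hom: "homogeneous_mean M"
      and ex: "has_sym_expansion M a"
  shows "asymp_expansion (\<lambda>u. M (1 - u) (1 + u)) (fps_subst_sq (Abs_fps a))"
proof (rule asymp_expansionI)
  fix N
  define R where "R = (\<lambda>u. M (1 - u) (1 + u) - (\<Sum>n\<le>N. a n * u ^ (2 * n)))"
  have "eventually (\<lambda>u::real. u \<in> {0<..<1}) (at_right 0)"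
    by (rule eventually_at_right_real) simp
  then have "eventually (\<lambda>u. R (- u) = R u \<and> (- u) ^ (2 * N) = u ^ (2 * N)) (at_right (0::real))"
    by eventually_elim (use sym in \<open>auto simp: R_def symmetric_mean_def\<close>)
  then have R_at: "R \<in> o[at 0](\<lambda>u. u ^ (2 * N))"
    using sym_expansion_at_right_0[OF hom ex, of N, folded R_def]
    by (intro smallo_at_right_even_imp_at_0)
  have "(\<Sum>n\<le>N. a n * 0 ^ (2 * n)) = a 0"
    by (induction N) simp_all
  then have "R 0 = 0"
    by (simp add: R_def mean_diag[OF mean] sym_expansion_coeff_0[OF mean ex])
  with R_at have "R \<in> o[nhds 0](\<lambda>u. u ^ (2 * N))"
    by (rule smallo_at_imp_nhds)
  then show "\<exists>k\<ge>N. (\<lambda>u. M (1 - u) (1 + u) - poly (truncate_fps (Suc k) (fps_subst_sq (Abs_fps a))) u)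
      \<in> o[nhds 0](\<lambda>u. u ^ k)"
    by (intro exI[of _ "2 * N"]) (simp add: R_def poly_truncate_fps_subst_sq)
qed

section \<open>Homogeneous means of perturbed arguments\<close>

text \<open>The expansion of \<open>c u * f (d u / c u)\<close> when \<open>c\<close> and \<open>d\<close> have expansions \<open>C\<close> and
  \<open>fps_X * D\<close> and \<open>f w\<close> has the expansion \<open>\<Sum>n. a n * w ^ (2 * n)\<close>: the \<open>n\<close>-th term
  starts at \<open>X\<^sup>2\<^sup>n\<close>, so each coefficient is a finite sum.\<close>

definition homogeneous_subst :: "(nat \<Rightarrow> real) \<Rightarrow> real fps \<Rightarrow> real fps \<Rightarrow> real fps" where
  "homogeneous_subst a C D = Abs_fps (\<lambda>j. \<Sum>n\<le>j.
     a n * fps_nth (fps_X ^ (2 * n) * (C * D ^ (2 * n) * inverse C ^ (2 * n))) j)"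

lemma sum_atMost_half:
  fixes f :: "nat \<Rightarrow> 'a::comm_monoid_add"
  assumes "j div 2 \<le> J"
  shows "(\<Sum>n\<le>J. if j < 2 * n then 0 else f n) = (\<Sum>n\<le>j div 2. f n)"
proof -
  have "(\<Sum>n\<le>J. if j < 2 * n then 0 else f n) = (\<Sum>n\<le>j div 2. if j < 2 * n then 0 else f n)"
    using assms by (intro sum.mono_neutral_right) auto
  also have "\<dots> = (\<Sum>n\<le>j div 2. f n)"
    by (intro sum.cong) auto
  finally show ?thesis .
qed

lemma fps_nth_sum_X_power_mult:
  fixes a :: "nat \<Rightarrow> 'a::comm_semiring_1"
  assumes "j div 2 \<le> J"
  shows "(\<Sum>n\<le>J. a n * fps_nth (fps_X ^ (2 * n) * T n) j)
      = (\<Sum>n\<le>j div 2. a n * fps_nth (T n) (j - 2 * n))"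
  unfolding fps_X_power_mult_nth using sum_atMost_half[OF assms, of "\<lambda>n. a n * fps_nth (T n) (j - 2 * n)"]
  by (simp add: if_distrib cong: if_cong)

lemma homogeneous_subst_nth:
  "fps_nth (homogeneous_subst a C D) j
    = (\<Sum>n\<le>j div 2. a n * fps_nth (C * D ^ (2 * n) * inverse C ^ (2 * n)) (j - 2 * n))"
  unfolding homogeneous_subst_def fps_nth_Abs_fps by (rule fps_nth_sum_X_power_mult) simp

lemma truncate_fps_homogeneous_subst:
  "truncate_fps (Suc J) (\<Sum>n\<le>J. fps_const (a n) * (C * (fps_X * D) ^ (2 * n) * inverse C ^ (2 * n)))
    = truncate_fps (Suc J) (homogeneous_subst a C D)"
proof (rule poly_eqI)
  fix j
  have "(\<Sum>n\<le>J. a n * fps_nth (C * (fps_X * D) ^ (2 * n) * inverse C ^ (2 * n)) j)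
      = fps_nth (homogeneous_subst a C D) j" if "j \<le> J"
    using that unfolding homogeneous_subst_nth
    by (subst fps_nth_sum_X_power_mult[symmetric]) (auto simp: power_mult_distrib mult_ac)
  then show "coeff (truncate_fps (Suc J) (\<Sum>n\<le>J. fps_const (a n) * (C * (fps_X * D) ^ (2 * n) * inverse C ^ (2 * n)))) j
      = coeff (truncate_fps (Suc J) (homogeneous_subst a C D)) j"
    by (simp add: coeff_truncate_fps fps_sum_nth)
qed

lemma asymp_expansion_X_mult_bigo:
  assumes "asymp_expansion f (fps_X * D)"
  shows "f \<in> O[nhds 0](\<lambda>u. u)"
proof -
  have "(\<lambda>u. f u - poly (truncate_fps (Suc 1) (fps_X * D)) u) \<in> O[nhds 0](\<lambda>u. u)"
    using asymp_expansionD[OF assms, of 1] by (simp add: landau_o.small_imp_big)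
  moreover have "(\<lambda>u. poly (truncate_fps (Suc 1) (fps_X * D)) u) \<in> O[nhds 0](\<lambda>u. u)"
    by (rule bigoI[where c = "\<bar>fps_nth D 0\<bar>"])
       (simp add: poly_truncate_fps fps_X_mult_nth abs_mult)
  ultimately show ?thesis
    using sum_in_bigo(1) by fastforce
qed

lemma homogeneous_mean_scale:
  assumes "homogeneous_mean K" and "c > 0" and "\<bar>d\<bar> < c"
  shows "K (c - d) (c + d) = c * K (1 - d / c) (1 + d / c)"
proof -
  have "c * (1 - d / c) = c - d" and "c * (1 + d / c) = c + d"
    using assms(2) by (simp_all add: field_simps)
  then have "K (c - d) (c + d) = K (c * (1 - d / c)) (c * (1 + d / c))"
    by simp
  also have "\<dots> = c * K (1 - d / c) (1 + d / c)"
  proof -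
    have "0 < 1 - d / c" and "0 < 1 + d / c"
      using assms(2,3) by (auto simp: field_simps abs_less_iff)
    then show ?thesis
      using assms(1,2) unfolding homogeneous_mean_def by blast
  qed
  finally show ?thesis .
qed

lemma homogeneous_mean_split:
  assumes "homogeneous_mean K" and "c > 0" and "\<bar>d\<bar> < c"
  shows "K (c - d) (c + d) = (\<Sum>n\<le>J. a n * (c * d ^ (2 * n) * inverse c ^ (2 * n)))
    + (K (1 - d / c) (1 + d / c) - (\<Sum>n\<le>J. a n * (d / c) ^ (2 * n))) * c"
proof -
  have "c * (\<Sum>n\<le>J. a n * (d / c) ^ (2 * n)) = (\<Sum>n\<le>J. a n * (c * d ^ (2 * n) * inverse c ^ (2 * n)))"
    unfolding sum_distrib_left by (intro sum.cong refl) (simp add: divide_inverse power_mult_distrib mult_ac)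
  with homogeneous_mean_scale[OF assms] show ?thesis
    by (simp add: algebra_simps)
qed

lemma asymp_expansion_homogeneous_mean:
  fixes K :: "real \<Rightarrow> real \<Rightarrow> real" and c d :: "real \<Rightarrow> real"
  assumes hom: "homogeneous_mean K"
      and K_exp: "asymp_expansion (\<lambda>w. K (1 - w) (1 + w)) (fps_subst_sq (Abs_fps a))"
      and c_exp: "asymp_expansion c C" and C0: "fps_nth C 0 > 0"
      and d_exp: "asymp_expansion d (fps_X * D)"
  shows "asymp_expansion (\<lambda>u. K (c u - d u) (c u + d u)) (homogeneous_subst a C D)"
proof (rule asymp_expansionI)
  fix J
  define v where "v = (\<lambda>u. d u / c u)"
  define r where "r = (\<lambda>w. K (1 - w) (1 + w) - (\<Sum>n\<le>J. a n * w ^ (2 * n)))"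
  define S where "S = (\<Sum>n\<le>J. fps_const (a n) * (C * (fps_X * D) ^ (2 * n) * inverse C ^ (2 * n)))"
  have lim_c: "(c \<longlongrightarrow> fps_nth C 0) (nhds 0)"
    using c_exp by (rule asymp_expansion_tendsto)
  have "(d \<longlongrightarrow> 0) (nhds 0)"
    using asymp_expansion_tendsto[OF d_exp] by simp
  then have lim_v: "(v \<longlongrightarrow> 0) (nhds 0)"
    unfolding v_def using tendsto_divide[OF _ lim_c] C0 by fastforce
  have v_bigo: "v \<in> O[nhds 0](\<lambda>u. u)"
    unfolding v_def divide_inverse
    using asymp_expansion_X_mult_bigo[OF d_exp] tendsto_imp_bigo_1[OF tendsto_inverse[OF lim_c]] C0
    by (intro landau_o.big_1_mult) auto
  have "r \<in> o[nhds 0](\<lambda>w. w ^ (2 * J))"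
    using asymp_expansionD[OF K_exp, of "2 * J"] by (simp add: r_def poly_truncate_fps_subst_sq)
  then have "(\<lambda>u. r (v u)) \<in> o[nhds 0](\<lambda>u. u ^ (2 * J))"
    using lim_v v_bigo by (rule smallo_compose_bigo_ident)
  then have "(\<lambda>u. r (v u)) \<in> o[nhds 0](\<lambda>u. u ^ J)"
    using power_bigo_nhds_0[of J "2 * J"] by (auto intro: landau_o.small_big_trans)
  then have remainder: "(\<lambda>u. r (v u) * c u) \<in> o[nhds 0](\<lambda>u. u ^ J)"
    using tendsto_imp_bigo_1[OF lim_c] by (rule landau_o.small_1_mult)
  have S_exp: "asymp_expansion (\<lambda>u. \<Sum>n\<le>J. a n * (c u * d u ^ (2 * n) * inverse (c u) ^ (2 * n))) S"
    unfolding S_def using C0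
    by (intro asymp_expansion_sum asymp_expansion_cmult asymp_expansion_mult asymp_expansion_power
        asymp_expansion_inverse c_exp d_exp) auto
  have main: "(\<lambda>u. (\<Sum>n\<le>J. a n * (c u * d u ^ (2 * n) * inverse (c u) ^ (2 * n)))
      - poly (truncate_fps (Suc J) (homogeneous_subst a C D)) u) \<in> o[nhds 0](\<lambda>u. u ^ J)"
    using asymp_expansionD[OF S_exp, of J] unfolding S_def truncate_fps_homogeneous_subst .
  have "eventually (\<lambda>u. c u > 0) (nhds 0)" and "eventually (\<lambda>u. \<bar>v u\<bar> < 1) (nhds 0)"
    using order_tendstoD(1)[OF lim_c C0] tendstoD[OF lim_v, of 1] by auto
  then have "eventually (\<lambda>u. (\<Sum>n\<le>J. a n * (c u * d u ^ (2 * n) * inverse (c u) ^ (2 * n)))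
      - poly (truncate_fps (Suc J) (homogeneous_subst a C D)) u + r (v u) * c u
      = K (c u - d u) (c u + d u) - poly (truncate_fps (Suc J) (homogeneous_subst a C D)) u) (nhds 0)"
  proof eventually_elim
    case (elim u)
    then have "\<bar>d u\<bar> < c u"
      by (simp add: v_def abs_divide divide_less_eq)
    from homogeneous_mean_split[OF hom elim(1) this, of a J] show ?case
      by (simp add: v_def r_def)
  qed
  from landau_o.small.in_cong[OF this] sum_in_smallo(1)[OF main remainder]
  have "(\<lambda>u. K (c u - d u) (c u + d u) - poly (truncate_fps (Suc J) (homogeneous_subst a C D)) u)
      \<in> o[nhds 0](\<lambda>u. u ^ J)"
    by blast
  then show "\<exists>k\<ge>J. (\<lambda>u. K (c u - d u) (c u + d u)
      - poly (truncate_fps (Suc k) (homogeneous_subst a C D)) u) \<in> o[nhds 0](\<lambda>u. u ^ k)"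
    by blast
qed

section \<open>The expansion of \<open>N(1 - u, M(1 - u, 1 + u))\<close>\<close>

text \<open>\<open>N (1 - u) (f u) = N (c - d) (c + d)\<close> for \<open>c = (1 - u + f u) / 2\<close> and
  \<open>d = (f u - 1 + u) / 2\<close>, where \<open>f u = M (1 - u) (1 + u)\<close>; \<open>hseq\<close> and \<open>gseq\<close> are
  the coefficients of \<open>2 c\<close> and \<open>2 d / u\<close>.\<close>

lemma fps_hseq:
  assumes "a 0 = 1"
  shows "Abs_fps (hseq a) = 1 - fps_X + fps_subst_sq (Abs_fps a)"
  by (rule fps_ext) (auto simp: hseq_def fps_subst_sq_nth fps_X_nth assms)

lemma fps_X_mult_gseq:
  assumes "a 0 = 1"
  shows "fps_X * Abs_fps (gseq a) = fps_subst_sq (Abs_fps a) - 1 + fps_X"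
proof (rule fps_ext)
  fix j
  show "fps_nth (fps_X * Abs_fps (gseq a)) j = fps_nth (fps_subst_sq (Abs_fps a) - 1 + fps_X) j"
    by (cases j) (auto simp: fps_X_mult_nth gseq_def fps_subst_sq_nth fps_X_nth assms elim: oddE)
qed

lemma gseq_0_pos: "gseq a 0 > 0"
  by (simp add: gseq_def)

lemma hseq_0_pos: "hseq a 0 > 0"
  by (simp add: hseq_def)

text \<open>The coefficients of \<open>N (1 - u) (M (1 - u) (1 + u))\<close>.\<close>

definition nested_coeff :: "(nat \<Rightarrow> real) \<Rightarrow> (nat \<Rightarrow> real) \<Rightarrow> nat \<Rightarrow> real" where
  "nested_coeff aN aM j = (1/2) * (\<Sum>n\<le>j div 2. aN n * (\<Sum>k\<le>j - 2 * n.
     P k (2 * real n) (gseq aM) * P (j - 2 * n - k) (1 - 2 * real n) (hseq aM)))"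

lemma sseq_eq_nested_coeff: "sseq aN aM = (\<lambda>m. nested_coeff aN aM (2 * m))"
  by (simp add: sseq_def nested_coeff_def fun_eq_iff)

lemma dseq_eq_nested_coeff: "dseq aN aM = (\<lambda>m. - nested_coeff aN aM (2 * m + 1))"
  by (simp add: dseq_def nested_coeff_def fun_eq_iff)

lemma homogeneous_subst_nested_coeff:
  fixes aM aN :: "nat \<Rightarrow> real"
  defines "G \<equiv> Abs_fps (gseq aM)" and "H \<equiv> Abs_fps (hseq aM)"
  shows "homogeneous_subst aN (fps_const (1/2) * H) (fps_const (1/2) * G) = Abs_fps (nested_coeff aN aM)"
proof (rule fps_ext)
  fix j
  have scaled: "fps_const (1/2) * H * (fps_const (1/2) * G) ^ (2 * n) * inverse (fps_const (1/2) * H) ^ (2 * n)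
      = fps_const (1/2) * (H * G ^ (2 * n) * inverse H ^ (2 * n))" for n
  proof -
    have "fps_const ((1/2::real) ^ (2 * n)) * fps_const (2 ^ (2 * n)) = 1"
      by (simp flip: power_mult_distrib)
    then show ?thesis
      by (simp add: power_mult_distrib fps_inverse_mult fps_const_inverse fps_const_power algebra_simps)
  qed
  show "fps_nth (homogeneous_subst aN (fps_const (1/2) * H) (fps_const (1/2) * G)) j
      = fps_nth (Abs_fps (nested_coeff aN aM)) j"
    unfolding homogeneous_subst_nth scaled nested_coeff_def fps_nth_Abs_fps fps_mult_left_const_nth
    unfolding G_def H_def fps_nth_eq_P_convolution[of "hseq aM" "gseq aM", OF hseq_0_pos gseq_0_pos]
    by (simp add: sum_distrib_left mult_ac)
qed

lemma asymp_expansion_nested_mean: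
  assumes mean_M: "is_mean M" and sym_M: "symmetric_mean M" and hom_M: "homogeneous_mean M"
      and M_exp: "has_sym_expansion M aM"
      and hom_N: "homogeneous_mean N"
      and N_exp: "asymp_expansion (\<lambda>u. N (1 - u) (1 + u)) (fps_subst_sq (Abs_fps aN))"
  shows "asymp_expansion (\<lambda>u. N (1 - u) (M (1 - u) (1 + u))) (Abs_fps (nested_coeff aN aM))"
proof -
  define fM where "fM = (\<lambda>u. M (1 - u) (1 + u))"
  have aM0: "aM 0 = 1"
    using mean_M M_exp by (rule sym_expansion_coeff_0)
  have fM_exp: "asymp_expansion fM (fps_subst_sq (Abs_fps aM))"
    unfolding fM_def using mean_M sym_M hom_M M_exp by (rule asymp_expansion_mean)
  have "asymp_expansion (\<lambda>u. (1/2) * (1 - u + fM u)) (fps_const (1/2) * (1 - fps_X + fps_subst_sq (Abs_fps aM)))"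
    using asymp_expansion_const[of 1]
    by (intro asymp_expansion_cmult asymp_expansion_add asymp_expansion_diff asymp_expansion_ident fM_exp) auto
  then have c_exp: "asymp_expansion (\<lambda>u. (1/2) * (1 - u + fM u)) (fps_const (1/2) * Abs_fps (hseq aM))"
    by (simp add: fps_hseq[of aM, OF aM0])
  have "asymp_expansion (\<lambda>u. (1/2) * (fM u - 1 + u)) (fps_const (1/2) * (fps_subst_sq (Abs_fps aM) - 1 + fps_X))"
    using asymp_expansion_const[of 1]
    by (intro asymp_expansion_cmult asymp_expansion_add asymp_expansion_diff asymp_expansion_ident fM_exp) auto
  then have d_exp: "asymp_expansion (\<lambda>u. (1/2) * (fM u - 1 + u)) (fps_X * (fps_const (1/2) * Abs_fps (gseq aM)))"
    by (simp add: fps_X_mult_gseq[of aM, OF aM0] mult.left_commute[of fps_X])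
  have "fps_nth (fps_const (1/2) * Abs_fps (hseq aM)) 0 > 0"
    by (simp add: hseq_def)
  moreover have "(1/2) * (1 - u + fM u) - (1/2) * (fM u - 1 + u) = 1 - u"
    and "(1/2) * (1 - u + fM u) + (1/2) * (fM u - 1 + u) = fM u" for u
    by (simp_all add: field_simps)
  ultimately show ?thesis
    using asymp_expansion_homogeneous_mean[OF hom_N N_exp c_exp _ d_exp]
    by (simp add: homogeneous_subst_nested_coeff fM_def)
qed

section \<open>The stabilizability identity\<close>

lemma asymp_expansion_even_part:
  assumes "asymp_expansion f F"
  shows "asymp_expansion (\<lambda>u. (1/2) * (f u + f (- u))) (fps_subst_sq (Abs_fps (\<lambda>m. fps_nth F (2 * m))))"
proof -
  have "asymp_expansion (\<lambda>u. (1/2) * (f u + f (- u))) (fps_const (1/2) * (F + (F oo - fps_X)))"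
    using assms by (intro asymp_expansion_cmult asymp_expansion_add asymp_expansion_reflect)
  moreover have "fps_const (1/2) * (F + (F oo - fps_X)) = fps_subst_sq (Abs_fps (\<lambda>m. fps_nth F (2 * m)))"
    by (rule fps_ext) (auto simp: fps_compose_uminus' fps_subst_sq_nth)
  ultimately show ?thesis
    by simp
qed

lemma asymp_expansion_odd_part:
  assumes "asymp_expansion f F"
  shows "asymp_expansion (\<lambda>u. (1/2) * (f (- u) - f u))
    (fps_X * fps_subst_sq (Abs_fps (\<lambda>m. - fps_nth F (2 * m + 1))))"
proof -
  have "asymp_expansion (\<lambda>u. (1/2) * (f (- u) - f u)) (fps_const (1/2) * ((F oo - fps_X) - F))"
    using assms by (intro asymp_expansion_cmult asymp_expansion_diff asymp_expansion_reflect)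
  moreover have "fps_const (1/2) * ((F oo - fps_X) - F)
      = fps_X * fps_subst_sq (Abs_fps (\<lambda>m. - fps_nth F (2 * m + 1)))"
  proof (rule fps_ext)
    fix j
    show "fps_nth (fps_const (1/2) * ((F oo - fps_X) - F)) j
        = fps_nth (fps_X * fps_subst_sq (Abs_fps (\<lambda>m. - fps_nth F (2 * m + 1)))) j"
      by (cases j) (auto simp: fps_compose_uminus' fps_subst_sq_nth fps_X_mult_nth elim: oddE)
  qed
  ultimately show ?thesis
    by simp
qed

lemma homogeneous_subst_subst_sq_nth:
  assumes "fps_nth S 0 \<noteq> 0"
  shows "fps_nth (homogeneous_subst a (fps_subst_sq S) (fps_subst_sq D)) (2 * m)
    = (\<Sum>n\<le>m. a n * fps_nth (S * D ^ (2 * n) * inverse S ^ (2 * n)) (m - n))"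
proof -
  have "fps_subst_sq S * fps_subst_sq D ^ (2 * n) * inverse (fps_subst_sq S) ^ (2 * n)
      = fps_subst_sq (S * D ^ (2 * n) * inverse S ^ (2 * n))" for n
    using assms by (simp add: fps_subst_sq_mult fps_subst_sq_power fps_subst_sq_inverse)
  then show ?thesis
    by (simp add: homogeneous_subst_nth fps_subst_sq_nth flip: diff_mult_distrib2)
qed

lemma stabilizable_reflect:
  assumes mean_M: "is_mean M" and sym_M: "symmetric_mean M" and sym_N: "symmetric_mean N"
      and stab: "stabilizable K M N" and u: "\<bar>u\<bar> < 1"
  shows "N (1 - u) (1 + u) = K (N (1 - u) (M (1 - u) (1 + u))) (N (1 + u) (M (1 + u) (1 - u)))"
proof -
  have pos: "1 - u > 0" "1 + u > 0"
    using u by auto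
  then have "M (1 - u) (1 + u) > 0"
    using mean_M unfolding is_mean_def by (metis min_less_iff_conj order_less_le_trans)
  then have "N (1 + u) (M (1 + u) (1 - u)) = N (M (1 - u) (1 + u)) (1 + u)"
    using sym_M sym_N pos unfolding symmetric_mean_def by metis
  then show ?thesis
    using stab pos unfolding stabilizable_def by simp
qed

lemma sseq_0: "aN 0 = 1 \<Longrightarrow> sseq aN aM 0 = 1"
  by (simp add: sseq_def gseq_def hseq_def)

lemma dseq_0: "aN 0 = 1 \<Longrightarrow> dseq aN aM 0 = 1 / 2"
  by (simp add: dseq_def gseq_def hseq_def)

lemma stabilizable_expansion_eq:
  assumes mean_M: "is_mean M" and sym_M: "symmetric_mean M" and hom_M: "homogeneous_mean M"
      and mean_N: "is_mean N" and sym_N: "symmetric_mean N" and hom_N: "homogeneous_mean N"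
      and mean_K: "is_mean K" and sym_K: "symmetric_mean K" and hom_K: "homogeneous_mean K"
      and M_exp: "has_sym_expansion M aM" and N_exp: "has_sym_expansion N aN"
      and K_exp: "has_sym_expansion K aK"
      and stab: "stabilizable K M N"
  shows "fps_subst_sq (Abs_fps aN)
    = homogeneous_subst aK (fps_subst_sq (Abs_fps (sseq aN aM))) (fps_subst_sq (Abs_fps (dseq aN aM)))"
    (is "_ = ?W")
proof -
  define A where "A = (\<lambda>u. N (1 - u) (M (1 - u) (1 + u)))"
  have aN0: "aN 0 = 1"
    using mean_N N_exp by (rule sym_expansion_coeff_0)
  have A_exp: "asymp_expansion A (Abs_fps (nested_coeff aN aM))"
    unfolding A_def using mean_M sym_M hom_M M_exp hom_N
    by (rule asymp_expansion_nested_mean[OF _ _ _ _ _ asymp_expansion_mean[OF mean_N sym_N hom_N N_exp]])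
  have "asymp_expansion (\<lambda>u. (1/2) * (A u + A (- u))) (fps_subst_sq (Abs_fps (sseq aN aM)))"
    using asymp_expansion_even_part[OF A_exp] by (simp add: sseq_eq_nested_coeff)
  moreover have "asymp_expansion (\<lambda>u. (1/2) * (A (- u) - A u)) (fps_X * fps_subst_sq (Abs_fps (dseq aN aM)))"
    using asymp_expansion_odd_part[OF A_exp] by (simp add: dseq_eq_nested_coeff)
  moreover have "fps_nth (fps_subst_sq (Abs_fps (sseq aN aM))) 0 > 0"
    by (simp add: fps_subst_sq_nth sseq_0[of aN, OF aN0])
  ultimately have "asymp_expansion (\<lambda>u. K ((1/2) * (A u + A (- u)) - (1/2) * (A (- u) - A u))
      ((1/2) * (A u + A (- u)) + (1/2) * (A (- u) - A u))) ?W"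
    by (intro asymp_expansion_homogeneous_mean[OF hom_K asymp_expansion_mean[OF mean_K sym_K hom_K K_exp]])
  then have "asymp_expansion (\<lambda>u. K (A u) (A (- u))) ?W"
    by (simp add: field_simps)
  moreover have "eventually (\<lambda>u::real. \<bar>u\<bar> < 1) (nhds 0)"
    by (auto simp: eventually_nhds_metric dist_real_def intro!: exI[of _ 1])
  then have "eventually (\<lambda>u. K (A u) (A (- u)) = N (1 - u) (1 + u)) (nhds 0)"
    by eventually_elim (simp add: A_def stabilizable_reflect[OF mean_M sym_M sym_N stab])
  ultimately have "asymp_expansion (\<lambda>u. N (1 - u) (1 + u)) ?W"
    by (simp add: asymp_expansion_cong)
  with asymp_expansion_mean[OF mean_N sym_N hom_N N_exp] show ?thesis
    by (rule asymp_expansion_unique)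
qed

lemma stabilizable_coeff_eq:
  assumes mean_M: "is_mean M" and sym_M: "symmetric_mean M" and hom_M: "homogeneous_mean M"
      and mean_N: "is_mean N" and sym_N: "symmetric_mean N" and hom_N: "homogeneous_mean N"
      and mean_K: "is_mean K" and sym_K: "symmetric_mean K" and hom_K: "homogeneous_mean K"
      and M_exp: "has_sym_expansion M aM" and N_exp: "has_sym_expansion N aN"
      and K_exp: "has_sym_expansion K aK"
      and stab: "stabilizable K M N"
  shows "aN m = sseq aN aM m + (\<Sum>n\<in>{1..m}. aK n * (\<Sum>k\<le>m - n.
      P k (2 * real n) (dseq aN aM) * P (m - n - k) (1 - 2 * real n) (sseq aN aM)))"
proof -
  define S D where "S = Abs_fps (sseq aN aM)" and "D = Abs_fps (dseq aN aM)"
  have aN0: "aN 0 = 1"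
    using mean_N N_exp by (rule sym_expansion_coeff_0)
  have s0: "sseq aN aM 0 > 0" and d0: "dseq aN aM 0 > 0"
    using sseq_0[of aN aM, OF aN0] dseq_0[of aN aM, OF aN0] by simp_all
  have "aN m = fps_nth (fps_subst_sq (Abs_fps aN)) (2 * m)"
    by (simp add: fps_subst_sq_nth)
  also have "\<dots> = fps_nth (homogeneous_subst aK (fps_subst_sq S) (fps_subst_sq D)) (2 * m)"
    unfolding S_def D_def stabilizable_expansion_eq[OF assms] ..
  also have "\<dots> = (\<Sum>n\<le>m. aK n * fps_nth (S * D ^ (2 * n) * inverse S ^ (2 * n)) (m - n))"
    by (rule homogeneous_subst_subst_sq_nth) (use s0 in \<open>simp add: S_def\<close>)
  also have "\<dots> = aK 0 * fps_nth S m
      + (\<Sum>n\<in>{1..m}. aK n * fps_nth (S * D ^ (2 * n) * inverse S ^ (2 * n)) (m - n))"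
    using s0 by (simp add: atMost_atLeast0 sum.atLeast_Suc_atMost inverse_mult_eq_1)
  also have "\<dots> = sseq aN aM m + (\<Sum>n\<in>{1..m}. aK n * (\<Sum>k\<le>m - n.
      P k (2 * real n) (dseq aN aM) * P (m - n - k) (1 - 2 * real n) (sseq aN aM)))"
    unfolding S_def D_def fps_nth_eq_P_convolution[of "sseq aN aM" "dseq aN aM", OF s0 d0]
    using sym_expansion_coeff_0[OF mean_K K_exp] by simp
  finally show ?thesis .
qed

lemma sseq_split_top:
  "sseq aN aM m = (1/2) * (\<Sum>n<m. aN n * (\<Sum>k\<le>2*m-2*n.
      P k (2 * real n) (gseq aM) * P (2*m-2*n-k) (1 - 2 * real n) (hseq aM))) + aN m / 2 ^ (2 * m)"
proof -
  have "(1/2) * 2 powr (1 - 2 * real m) = 1 / (2::real) ^ (2 * m)"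
    by (simp add: powr_diff powr_realpow[symmetric])
  then show ?thesis
    unfolding sseq_def lessThan_Suc_atMost[symmetric] sum.lessThan_Suc
    by (simp add: gseq_def hseq_def algebra_simps)
qed

lemma fixed_point_solve:
  fixes x r :: real
  assumes "x = r + x / 2 ^ (2 * m)" and "m \<ge> 1"
  shows "x = (2 ^ (2 * m) / (2 ^ (2 * m) - 1)) * r"
proof -
  have "(2::real) ^ (2 * m) > 1"
    using assms(2) by (intro one_less_power) auto
  with assms(1) show ?thesis
    by (simp add: field_simps)
qed

theorem theorem3p5:
  fixes M N K :: "real \<Rightarrow> real \<Rightarrow> real" and aM aN aK :: "nat \<Rightarrow> real"
  assumes "is_mean M" "symmetric_mean M" "homogeneous_mean M"
      and "is_mean N" "symmetric_mean N" "homogeneous_mean N"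
      and "is_mean K" "symmetric_mean K" "homogeneous_mean K"
      and "has_sym_expansion M aM" "has_sym_expansion N aN" "has_sym_expansion K aK"
      and "stable_mean K" "stable_mean M"
      and "stabilizable K M N"
  shows "aN 0 = 1 \<and>
    (\<forall>m\<ge>1. aN m = (2 ^ (2*m) / (2 ^ (2*m) - 1)) *
        ((1/2) * (\<Sum>n<m. aN n * (\<Sum>k\<le>2*m-2*n.
            P k (2 * real n) (gseq aM) * P (2*m-2*n-k) (1 - 2 * real n) (hseq aM)))
         + (\<Sum>n\<in>{1..m}. aK n * (\<Sum>k\<le>m-n.
            P k (2 * real n) (dseq aN aM) * P (m-n-k) (1 - 2 * real n) (sseq aN aM))))) \<and>
    aN 1 = (aK 1 + 2 * aM 1) / 3"
proof (intro conjI allI impI)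
  note coeff_eq = stabilizable_coeff_eq[OF assms(1-12,15)]
  show aN0: "aN 0 = 1"
    using assms(4,11) by (rule sym_expansion_coeff_0)
  show "aN m = (2 ^ (2*m) / (2 ^ (2*m) - 1)) *
        ((1/2) * (\<Sum>n<m. aN n * (\<Sum>k\<le>2*m-2*n.
            P k (2 * real n) (gseq aM) * P (2*m-2*n-k) (1 - 2 * real n) (hseq aM)))
         + (\<Sum>n\<in>{1..m}. aK n * (\<Sum>k\<le>m-n.
            P k (2 * real n) (dseq aN aM) * P (m-n-k) (1 - 2 * real n) (sseq aN aM))))"
    if "m \<ge> 1" for m
    using coeff_eq[of m] sseq_split_top[of aN aM m] that by (intro fixed_point_solve) linarith+
  show "aN 1 = (aK 1 + 2 * aM 1) / 3"
    using coeff_eq[of 1] sseq_split_top[of aN aM 1] aN0 dseq_0[of aN aM, OF aN0] sseq_0[of aN aM, OF aN0]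
    by (simp add: numeral_2_eq_2 gseq_def hseq_def field_simps)
qed

end
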